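(* Let $\Omega\subset\mathbb{R}^2$ be a bounded domain and $u,v\in C^{2}(\Omega)\cap C^0(\bar\Omega)$. For $w\in\{u,v\}$ let $S(w)=\{(x,y)\in\Omega:w_x-y=0,\ w_y+x=0\}$ and $N(w)=(w_x-y,w_y+x)/\sqrt{(w_x-y)^2+(w_y+x)^2}$ on $\Omega\setminus S(w)$. Suppose $N(u)=N(v)$ in $\Omega\setminus(S(u)\cup S(v))$ and $u=v$ on $\partial\Omega$. Then $u=v$ in $\Omega$. *)

theory Defs
  imports "HOL-Analysis.Analysis"
begin

definition px :: "(real \<times> real \<Rightarrow> real) \<Rightarrow> real \<times> real \<Rightarrow> real" where
  "px f p = deriv (\<lambda>t. f (t, snd p)) (fst p)"

definition py :: "(real \<times> real \<Rightarrow> real) \<Rightarrow> real \<times> real \<Rightarrow> real" where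
  "py f p = deriv (\<lambda>t. f (fst p, t)) (snd p)"

definition C1_on :: "(real \<times> real) set \<Rightarrow> (real \<times> real \<Rightarrow> real) \<Rightarrow> bool" where
  "C1_on S f \<longleftrightarrow>
     (\<forall>p\<in>S. (\<lambda>t. f (t, snd p)) differentiable (at (fst p)) \<and>
             (\<lambda>t. f (fst p, t)) differentiable (at (snd p))) \<and>
     continuous_on S (px f) \<and> continuous_on S (py f)"

definition C2_on :: "(real \<times> real) set \<Rightarrow> (real \<times> real \<Rightarrow> real) \<Rightarrow> bool" where
  "C2_on S f \<longleftrightarrow> C1_on S f \<and> C1_on S (px f) \<and> C1_on S (py f)"

definition sing_set :: "(real \<times> real) set \<Rightarrow> (real \<times> real \<Rightarrow> real) \<Rightarrow> (real \<times> real) set" where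
  "sing_set \<Omega> w = {p \<in> \<Omega>. px w p - snd p = 0 \<and> py w p + fst p = 0}"

definition Nfield :: "(real \<times> real \<Rightarrow> real) \<Rightarrow> real \<times> real \<Rightarrow> real \<times> real" where
  "Nfield w p = (let a = px w p - snd p; b = py w p + fst p; r = sqrt (a^2 + b^2)
                 in (a / r, b / r))"

end

theory Submission
  imports Defs
begin

(* For a function w put A_w = (w_x - y, w_y + x). By symmetry of the second derivatives the
   rotated field J A_w = (-(w_y + x), w_x - y) has divergence -2. If v > u + c somewhere with
   c > 0, then G = ((v - u - c)^+)^2 is C^1 with compact support in Omega, and
   grad G = 2 (v - u - c)^+ (A_v - A_u) is parallel to A_u, because N(u) = N(v) says exactly that
   A_u and A_v are parallel. Hence div (G J A_u) = grad G . J A_u - 2 G = -2 G; integrating over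
   Omega gives that the integral of G vanishes, so G = 0. Letting c tend to 0 and exchanging u
   and v gives u = v. *)

lemma fundamental_theorem_of_calculus_real:
  fixes f f' :: "real \<Rightarrow> real"
  assumes "a \<le> b" and "\<And>t. t \<in> {a..b} \<Longrightarrow> (f has_real_derivative f' t) (at t)"
  shows "(f' has_integral (f b - f a)) {a..b}"
  using assms by (intro fundamental_theorem_of_calculus)
    (auto simp: has_real_derivative_iff_has_vector_derivative intro: has_vector_derivative_at_within)

lemma has_real_derivative_px:
  assumes "C1_on S f" and "(x, y) \<in> S"
  shows "((\<lambda>t. f (t, y)) has_real_derivative px f (x, y)) (at x)"
  using assms unfolding C1_on_def px_def
  by (metis DERIV_deriv_iff_real_differentiable fst_conv snd_conv)

lemma has_real_derivative_py:
  assumes "C1_on S f" and "(x, y) \<in> S"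
  shows "((\<lambda>t. f (x, t)) has_real_derivative py f (x, y)) (at y)"
  using assms unfolding C1_on_def py_def
  by (metis DERIV_deriv_iff_real_differentiable fst_conv snd_conv)

lemma has_real_derivative_pos_part_square:
  "((\<lambda>t. (max t 0)\<^sup>2) has_real_derivative 2 * max x 0) (at (x::real))"
proof (cases x "0::real" rule: linorder_cases)
  case less
  have "((\<lambda>t. 0) has_real_derivative 2 * max x 0) (at x)"
    using less by simp
  then show ?thesis
    by (rule has_field_derivative_transform_within_open[where S = "{..<0}"]) (use less in auto)
next
  case equal
  have "\<forall>z. (max z 0)\<^sup>2 - (max x 0)\<^sup>2 = max z 0 * (z - x)"
    using equal by (auto simp: max_def power2_eq_square)
  moreover have "isCont (\<lambda>z. max z 0) x"
    by (intro continuous_intros)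
  ultimately show ?thesis
    using equal by (subst CARAT_DERIV) (rule exI[of _ "\<lambda>z. max z 0"], simp)
next
  case greater
  have "((\<lambda>t. t\<^sup>2) has_real_derivative 2 * max x 0) (at x)"
    using greater by (auto intro!: derivative_eq_intros)
  then show ?thesis
    by (rule has_field_derivative_transform_within_open[where S = "{0<..}"]) (use greater in auto)
qed

lemma integral_box_px:
  fixes f g :: "real \<times> real \<Rightarrow> real"
  assumes "a1 \<le> b1" and cont: "continuous_on (cbox (a1, a2) (b1, b2)) g"
    and deriv: "\<And>x y. x \<in> {a1..b1} \<Longrightarrow> y \<in> {a2..b2} \<Longrightarrow>
      ((\<lambda>t. f (t, y)) has_real_derivative g (x, y)) (at x)"
  shows "integral (cbox (a1, a2) (b1, b2)) g = integral {a2..b2} (\<lambda>y. f (b1, y) - f (a1, y))"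
proof -
  have "integral (cbox (a1, a2) (b1, b2)) g = integral {a2..b2} (\<lambda>y. integral {a1..b1} (\<lambda>x. g (x, y)))"
    using integral_swap_continuous[of a1 a2 b1 b2 "\<lambda>x y. g (x, y)"] cont
    by (simp add: integral_prod_continuous)
  also have "\<dots> = integral {a2..b2} (\<lambda>y. f (b1, y) - f (a1, y))"
  proof (rule integral_cong)
    fix y assume "y \<in> {a2..b2}"
    then show "integral {a1..b1} (\<lambda>x. g (x, y)) = f (b1, y) - f (a1, y)"
      using fundamental_theorem_of_calculus_real[OF \<open>a1 \<le> b1\<close>, of "\<lambda>t. f (t, y)"] deriv
      by (simp add: integral_unique)
  qed
  finally show ?thesis .
qed

lemma integral_box_py:
  fixes f g :: "real \<times> real \<Rightarrow> real"
  assumes "a2 \<le> b2" and cont: "continuous_on (cbox (a1, a2) (b1, b2)) g"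
    and deriv: "\<And>x y. x \<in> {a1..b1} \<Longrightarrow> y \<in> {a2..b2} \<Longrightarrow>
      ((\<lambda>t. f (x, t)) has_real_derivative g (x, y)) (at y)"
  shows "integral (cbox (a1, a2) (b1, b2)) g = integral {a1..b1} (\<lambda>x. f (x, b2) - f (x, a2))"
proof -
  have "integral (cbox (a1, a2) (b1, b2)) g = integral {a1..b1} (\<lambda>x. integral {a2..b2} (\<lambda>y. g (x, y)))"
    using integral_prod_continuous[OF cont] by simp
  also have "\<dots> = integral {a1..b1} (\<lambda>x. f (x, b2) - f (x, a2))"
  proof (rule integral_cong)
    fix x assume "x \<in> {a1..b1}"
    then show "integral {a2..b2} (\<lambda>y. g (x, y)) = f (x, b2) - f (x, a2)"
      using fundamental_theorem_of_calculus_real[OF \<open>a2 \<le> b2\<close>, of "\<lambda>t. f (x, t)"] deriv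
      by (simp add: integral_unique)
  qed
  finally show ?thesis .
qed

lemma integral_box_py_px_eq_px_py:
  assumes C2: "C2_on \<Omega> u" and box: "cbox (a1, a2) (b1, b2) \<subseteq> \<Omega>" and "a1 \<le> b1" "a2 \<le> b2"
  shows "integral (cbox (a1, a2) (b1, b2)) (py (px u)) = integral (cbox (a1, a2) (b1, b2)) (px (py u))"
proof -
  have C1: "C1_on \<Omega> u" "C1_on \<Omega> (px u)" "C1_on \<Omega> (py u)"
    using C2 by (auto simp: C2_on_def)
  have mem: "(x, y) \<in> \<Omega>" if "x \<in> {a1..b1}" "y \<in> {a2..b2}" for x y
    using box that by (auto simp: cbox_Pair_eq)
  have cont: "continuous_on (cbox (a1, a2) (b1, b2)) (py (px u))"
    "continuous_on (cbox (a1, a2) (b1, b2)) (px (py u))"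
    using C1 box by (auto simp: C1_on_def intro: continuous_on_subset)
  define corners where "corners = (u (b1, b2) - u (a1, b2)) - (u (b1, a2) - u (a1, a2))"
  have edge_x: "((\<lambda>x. px u (x, y)) has_integral (u (b1, y) - u (a1, y))) {a1..b1}"
    if "y \<in> {a2..b2}" for y
    using that mem \<open>a1 \<le> b1\<close>
    by (intro fundamental_theorem_of_calculus_real has_real_derivative_px[OF C1(1)]) auto
  have edge_y: "((\<lambda>y. py u (x, y)) has_integral (u (x, b2) - u (x, a2))) {a2..b2}"
    if "x \<in> {a1..b1}" for x
    using that mem \<open>a2 \<le> b2\<close>
    by (intro fundamental_theorem_of_calculus_real has_real_derivative_py[OF C1(1)]) auto
  have "integral (cbox (a1, a2) (b1, b2)) (py (px u)) = integral {a1..b1} (\<lambda>x. px u (x, b2) - px u (x, a2))"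
    using mem \<open>a2 \<le> b2\<close> by (intro integral_box_py cont has_real_derivative_py[OF C1(2)])
  also have "\<dots> = corners"
    using has_integral_diff[OF edge_x[of b2] edge_x[of a2]] \<open>a2 \<le> b2\<close> by (simp add: corners_def integral_unique)
  also have "\<dots> = integral {a2..b2} (\<lambda>y. py u (b1, y) - py u (a1, y))"
    using has_integral_diff[OF edge_y[of b1] edge_y[of a1]] \<open>a1 \<le> b1\<close>
    by (simp add: corners_def integral_unique)
  also have "\<dots> = integral (cbox (a1, a2) (b1, b2)) (px (py u))"
    using mem \<open>a1 \<le> b1\<close> by (intro integral_box_px[symmetric] cont has_real_derivative_px[OF C1(3)])
  finally show ?thesis .
qed

lemma zero_if_box_integrals_zero:
  fixes h :: "'a::euclidean_space \<Rightarrow> real"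
  assumes "open S" and "continuous_on S h" and "\<And>a b. cbox a b \<subseteq> S \<Longrightarrow> integral (cbox a b) h = 0"
    and "p \<in> S"
  shows "h p = 0"
proof (rule ccontr)
  assume "h p \<noteq> 0"
  define g where "g = (\<lambda>q. h q * h p)"
  have "open (S \<inter> g -` {0<..})"
    using assms(1,2) unfolding g_def by (intro continuous_open_preimage continuous_intros) auto
  moreover have "p \<in> S \<inter> g -` {0<..}"
    using \<open>h p \<noteq> 0\<close> \<open>p \<in> S\<close> by (auto simp: g_def zero_less_mult_iff)
  ultimately obtain a b where box: "cbox a b \<subseteq> S \<inter> g -` {0<..}" and "p \<in> box a b"
    by (meson open_contains_cbox)
  have "continuous_on (cbox a b) g"
    using assms(2) box unfolding g_def by (intro continuous_intros) (auto intro: continuous_on_subset)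
  moreover have "box a b \<noteq> {}"
    using \<open>p \<in> box a b\<close> by blast
  moreover have "integral (cbox a b) g = 0"
    using assms(3) box by (simp add: g_def)
  ultimately have "\<forall>q \<in> cbox a b. g q = 0"
    using box by (subst integral_cbox_eq_0_iff[symmetric]) (auto intro: less_imp_le)
  then show False
    using \<open>p \<in> box a b\<close> \<open>h p \<noteq> 0\<close> box_subset_cbox by (force simp: g_def)
qed

lemma py_px_eq_px_py:
  assumes "open \<Omega>" and C2: "C2_on \<Omega> u" and "p \<in> \<Omega>"
  shows "py (px u) p = px (py u) p"
proof -
  have cont: "continuous_on \<Omega> (py (px u))" "continuous_on \<Omega> (px (py u))"
    using C2 by (auto simp: C2_on_def C1_on_def)
  have "(\<lambda>q. py (px u) q - px (py u) q) p = 0"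
  proof (rule zero_if_box_integrals_zero[OF \<open>open \<Omega>\<close> _ _ \<open>p \<in> \<Omega>\<close>])
    fix a b assume box: "cbox a b \<subseteq> \<Omega>"
    show "integral (cbox a b) (\<lambda>q. py (px u) q - px (py u) q) = 0"
    proof (cases "cbox a b = {}")
      case False
      obtain a1 a2 b1 b2 where ab: "a = (a1, a2)" "b = (b1, b2)"
        by fastforce
      then have "a1 \<le> b1" "a2 \<le> b2"
        using False by (auto simp: cbox_Pair_eq)
      then show ?thesis
        using box cont integral_box_py_px_eq_px_py[OF C2 box[unfolded ab]]
        by (simp add: ab integral_diff integrable_continuous continuous_on_subset)
    qed simp
  qed (use cont in \<open>intro continuous_intros\<close>)
  then show ?thesis
    by simp
qed

lemma continuous_on_zero_extension:
  fixes f :: "'a::topological_space \<Rightarrow> 'b::{zero, topological_space}"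
  assumes "open \<Omega>" and "closed K" and "K \<subseteq> \<Omega>" and "continuous_on \<Omega> f"
    and "\<And>q. q \<in> \<Omega> - K \<Longrightarrow> f q = 0"
  shows "continuous_on UNIV (\<lambda>q. if q \<in> \<Omega> then f q else 0)"
proof -
  have "continuous_on (\<Omega> \<union> - K) (\<lambda>q. if q \<in> \<Omega> then f q else 0)"
  proof (rule continuous_on_open_Un)
    show "continuous_on \<Omega> (\<lambda>q. if q \<in> \<Omega> then f q else 0)"
      using assms(4) by (rule continuous_on_eq) simp
    show "continuous_on (- K) (\<lambda>q. if q \<in> \<Omega> then f q else 0)"
      using continuous_on_const by (rule continuous_on_eq) (use assms(5) in auto)
  qed (use assms(1,2) in auto)
  moreover have "\<Omega> \<union> - K = UNIV"
    using assms(3) by blast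
  ultimately show ?thesis
    by simp
qed

lemma has_real_derivative_zero_extension:
  fixes f f' :: "'a::topological_space \<Rightarrow> real" and \<gamma> :: "real \<Rightarrow> 'a"
  assumes "open \<Omega>" and "closed K" and "K \<subseteq> \<Omega>" and "continuous_on UNIV \<gamma>"
    and "\<And>q. q \<in> \<Omega> - K \<Longrightarrow> f q = 0"
    and "\<gamma> s \<in> \<Omega> \<Longrightarrow> ((\<lambda>t. f (\<gamma> t)) has_real_derivative f' (\<gamma> s)) (at s)"
  shows "((\<lambda>t. if \<gamma> t \<in> \<Omega> then f (\<gamma> t) else 0) has_real_derivative
           (if \<gamma> s \<in> \<Omega> then f' (\<gamma> s) else 0)) (at s)"
proof (cases "\<gamma> s \<in> \<Omega>")
  case True
  show ?thesis
    by (rule has_field_derivative_transform_within_open[where S = "\<gamma> -` \<Omega>"])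
      (use assms True in \<open>auto intro: open_vimage\<close>)
next
  case False
  have "((\<lambda>t. 0) has_real_derivative (if \<gamma> s \<in> \<Omega> then f' (\<gamma> s) else 0)) (at s)"
    using False by simp
  then show ?thesis
    by (rule has_field_derivative_transform_within_open[where S = "\<gamma> -` (- K)"])
      (use assms False in \<open>auto intro: open_vimage\<close>)
qed

lemma has_real_derivative_locally_zero_eq_0:
  fixes f :: "'a::topological_space \<Rightarrow> real" and \<gamma> :: "real \<Rightarrow> 'a"
  assumes "open U" and "continuous_on UNIV \<gamma>" and "\<gamma> s \<in> U" and "\<And>q. q \<in> U \<Longrightarrow> f q = 0"
    and "((\<lambda>t. f (\<gamma> t)) has_real_derivative D) (at s)"
  shows "D = 0"
proof -
  have "((\<lambda>t. 0) has_real_derivative D) (at s)"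
    by (rule has_field_derivative_transform_within_open[OF assms(5), where S = "\<gamma> -` U"])
      (use assms in \<open>auto intro: open_vimage\<close>)
  then show ?thesis
    using DERIV_const DERIV_unique by blast
qed

lemma has_integral_divergence_compact_support_UNIV:
  fixes P Q Px Qy :: "real \<times> real \<Rightarrow> real"
  assumes "compact K" and off_K: "\<And>q. q \<notin> K \<Longrightarrow> P q = 0 \<and> Q q = 0 \<and> Px q = 0 \<and> Qy q = 0"
    and cont: "continuous_on UNIV Px" "continuous_on UNIV Qy"
    and dP: "\<And>x y. ((\<lambda>t. P (t, y)) has_real_derivative Px (x, y)) (at x)"
    and dQ: "\<And>x y. ((\<lambda>t. Q (x, t)) has_real_derivative Qy (x, y)) (at y)"
  shows "((\<lambda>q. Px q + Qy q) has_integral 0) UNIV"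
proof -
  \<comment> \<open>0 is added only to make the box nonempty when K is empty\<close>
  obtain a where a: "insert 0 K \<subseteq> box (-a) a"
    using bounded_subset_box_symmetric \<open>compact K\<close> compact_imp_bounded bounded_insert by metis
  obtain a1 a2 where a12: "a = (a1, a2)"
    by fastforce
  have mem_box: "(x, y) \<in> box (-a) a \<longleftrightarrow> -a1 < x \<and> x < a1 \<and> -a2 < y \<and> y < a2" for x y
    by (auto simp: a12 mem_box Basis_prod_def)
  have "-a1 \<le> a1" "-a2 \<le> a2"
    using a mem_box[of 0 0] by (auto simp: zero_prod_def)
  have off_box: "(x, y) \<notin> K" if "x = a1 \<or> x = -a1 \<or> y = a2 \<or> y = -a2" for x y
    using a mem_box that by auto
  define B where "B = cbox (-a1, -a2) (a1, a2)"
  have K_B: "K \<subseteq> B"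
    using a box_subset_cbox by (fastforce simp: B_def a12)
  have "integral B Px = integral {-a2..a2} (\<lambda>y. P (a1, y) - P (-a1, y))"
    unfolding B_def using cont \<open>-a1 \<le> a1\<close> by (intro integral_box_px dP) (auto intro: continuous_on_subset)
  also have "\<dots> = 0"
    using off_box off_K by simp
  finally have int_Px: "integral B Px = 0" .
  have "integral B Qy = integral {-a1..a1} (\<lambda>x. Q (x, a2) - Q (x, -a2))"
    unfolding B_def using cont \<open>-a2 \<le> a2\<close> by (intro integral_box_py dQ) (auto intro: continuous_on_subset)
  also have "\<dots> = 0"
    using off_box off_K by simp
  finally have int_Qy: "integral B Qy = 0" .
  have "Px integrable_on B" "Qy integrable_on B"
    using cont unfolding B_def by (auto intro: integrable_continuous continuous_on_subset)
  then have "((\<lambda>q. Px q + Qy q) has_integral 0) B"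
    using has_integral_add[OF integrable_integral integrable_integral] int_Px int_Qy by fastforce
  moreover have "Px q + Qy q = 0" if "q \<notin> B" for q
  proof -
    have "q \<notin> K"
      using K_B that by blast
    then show ?thesis
      using off_K by simp
  qed
  ultimately show ?thesis
    by (rule has_integral_on_superset) simp_all
qed

lemma has_integral_divergence_compact_support:
  fixes P Q Px Qy :: "real \<times> real \<Rightarrow> real"
  assumes "open \<Omega>" and "compact K" and "K \<subseteq> \<Omega>"
    and P0: "\<And>q. q \<in> \<Omega> - K \<Longrightarrow> P q = 0" and Q0: "\<And>q. q \<in> \<Omega> - K \<Longrightarrow> Q q = 0"
    and "continuous_on \<Omega> Px" and "continuous_on \<Omega> Qy"
    and dP: "\<And>x y. (x, y) \<in> \<Omega> \<Longrightarrow> ((\<lambda>t. P (t, y)) has_real_derivative Px (x, y)) (at x)"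
    and dQ: "\<And>x y. (x, y) \<in> \<Omega> \<Longrightarrow> ((\<lambda>t. Q (x, t)) has_real_derivative Qy (x, y)) (at y)"
  shows "((\<lambda>q. Px q + Qy q) has_integral 0) \<Omega>"
proof -
  define ext where "ext f q = (if q \<in> \<Omega> then f q else (0::real))" for f q
  have "closed K" and "open (\<Omega> - K)"
    using \<open>compact K\<close> \<open>open \<Omega>\<close> by (auto intro: compact_imp_closed)
  have lines: "continuous_on UNIV (\<lambda>t. (t, y))" "continuous_on UNIV (\<lambda>t. (x, t))" for x y :: real
    by (intro continuous_intros)+
  have Px0: "Px q = 0" if "q \<in> \<Omega> - K" for q
    by (rule has_real_derivative_locally_zero_eq_0[OF \<open>open (\<Omega> - K)\<close> lines(1)[of "snd q"],
          where s = "fst q" and f = P]) (use that P0 dP[of "fst q" "snd q"] in simp_all)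
  have Qy0: "Qy q = 0" if "q \<in> \<Omega> - K" for q
    by (rule has_real_derivative_locally_zero_eq_0[OF \<open>open (\<Omega> - K)\<close> lines(2)[of "fst q"],
          where s = "snd q" and f = Q]) (use that Q0 dQ[of "fst q" "snd q"] in simp_all)
  have "((\<lambda>q. ext Px q + ext Qy q) has_integral 0) UNIV"
  proof (rule has_integral_divergence_compact_support_UNIV[OF \<open>compact K\<close>])
    show "ext P q = 0 \<and> ext Q q = 0 \<and> ext Px q = 0 \<and> ext Qy q = 0" if "q \<notin> K" for q
      using that P0 Q0 Px0 Qy0 by (auto simp: ext_def)
    show "continuous_on UNIV (ext Px)" "continuous_on UNIV (ext Qy)"
      unfolding ext_def using assms \<open>closed K\<close> Px0 Qy0
      by (auto intro!: continuous_on_zero_extension)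
    show "((\<lambda>t. ext P (t, y)) has_real_derivative ext Px (x, y)) (at x)" for x y
      unfolding ext_def using assms \<open>closed K\<close> lines
      by (intro has_real_derivative_zero_extension[of _ K "\<lambda>t. (t, y)", simplified]) auto
    show "((\<lambda>t. ext Q (x, t)) has_real_derivative ext Qy (x, y)) (at y)" for x y
      unfolding ext_def using assms \<open>closed K\<close> lines
      by (intro has_real_derivative_zero_extension[of _ K "\<lambda>t. (x, t)", simplified]) auto
  qed
  then have "((\<lambda>q. if q \<in> \<Omega> then Px q + Qy q else 0) has_integral 0) UNIV"
    by (rule has_integral_eq[rotated]) (simp add: ext_def)
  then show ?thesis
    by (simp only: has_integral_restrict_UNIV)
qed

lemma zero_if_nonneg_has_integral_0:
  fixes h :: "'a::euclidean_space \<Rightarrow> real"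
  assumes "open S" and cont: "continuous_on S h" and nonneg: "\<And>q. q \<in> S \<Longrightarrow> 0 \<le> h q"
    and int: "(h has_integral 0) S" and "p \<in> S"
  shows "h p = 0"
proof (rule zero_if_box_integrals_zero[OF \<open>open S\<close> cont _ \<open>p \<in> S\<close>])
  fix a b assume box: "cbox a b \<subseteq> S"
  then have int_box: "h integrable_on cbox a b"
    using cont by (blast intro: integrable_continuous continuous_on_subset)
  have "0 \<le> integral (cbox a b) h"
    using box nonneg by (intro has_integral_nonneg[OF integrable_integral[OF int_box]]) auto
  moreover have "integral (cbox a b) h \<le> integral S h"
    using int box nonneg int_box by (intro integral_subset_le) auto
  ultimately show "integral (cbox a b) h = 0"
    using integral_unique[OF int] by simp
qed

lemma first_integral_compact_support_eq_0:
  fixes G Gx Gy u :: "real \<times> real \<Rightarrow> real"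
  assumes "open \<Omega>" and C2: "C2_on \<Omega> u" and "compact K" and "K \<subseteq> \<Omega>"
    and G0: "\<And>q. q \<in> \<Omega> - K \<Longrightarrow> G q = 0" and nonneg: "\<And>q. q \<in> \<Omega> \<Longrightarrow> 0 \<le> G q"
    and cont: "continuous_on \<Omega> G" "continuous_on \<Omega> Gx" "continuous_on \<Omega> Gy"
    and dGx: "\<And>x y. (x, y) \<in> \<Omega> \<Longrightarrow> ((\<lambda>t. G (t, y)) has_real_derivative Gx (x, y)) (at x)"
    and dGy: "\<And>x y. (x, y) \<in> \<Omega> \<Longrightarrow> ((\<lambda>t. G (x, t)) has_real_derivative Gy (x, y)) (at y)"
    and first_integral: "\<And>q. q \<in> \<Omega> \<Longrightarrow> (px u q - snd q) * Gy q = (py u q + fst q) * Gx q"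
    and "p \<in> \<Omega>"
  shows "G p = 0"
proof -
  have C1: "C1_on \<Omega> u" "C1_on \<Omega> (px u)" "C1_on \<Omega> (py u)"
    using C2 by (auto simp: C2_on_def)
  then have cont_u: "continuous_on \<Omega> (px u)" "continuous_on \<Omega> (py u)"
    "continuous_on \<Omega> (px (py u))" "continuous_on \<Omega> (py (px u))"
    by (auto simp: C1_on_def)
  define P where "P q = - (py u q + fst q) * G q" for q
  define Px where "Px q = - (px (py u) q + 1) * G q - (py u q + fst q) * Gx q" for q
  define Q where "Q q = (px u q - snd q) * G q" for q
  define Qy where "Qy q = (py (px u) q - 1) * G q + (px u q - snd q) * Gy q" for q
  have div: "((\<lambda>q. Px q + Qy q) has_integral 0) \<Omega>"
  proof (rule has_integral_divergence_compact_support[OF \<open>open \<Omega>\<close> \<open>compact K\<close> \<open>K \<subseteq> \<Omega>\<close>])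
    show "continuous_on \<Omega> Px" "continuous_on \<Omega> Qy"
      unfolding Px_def Qy_def using cont cont_u by (intro continuous_intros; simp)+
    show "((\<lambda>t. P (t, y)) has_real_derivative Px (x, y)) (at x)" if "(x, y) \<in> \<Omega>" for x y
      unfolding P_def Px_def using that
      by (auto intro!: derivative_eq_intros has_real_derivative_px[OF C1(3)] dGx simp: algebra_simps)
    show "((\<lambda>t. Q (x, t)) has_real_derivative Qy (x, y)) (at y)" if "(x, y) \<in> \<Omega>" for x y
      unfolding Q_def Qy_def using that
      by (auto intro!: derivative_eq_intros has_real_derivative_py[OF C1(2)] dGy simp: algebra_simps)
  qed (use G0 in \<open>simp_all add: P_def Q_def\<close>)
  have div_eq: "Px q + Qy q = -2 * G q" if "q \<in> \<Omega>" for q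
    using py_px_eq_px_py[OF \<open>open \<Omega>\<close> C2 that] first_integral[OF that]
    by (simp add: Px_def Qy_def algebra_simps)
  have "((\<lambda>q. -1/2 * (-2 * G q)) has_integral 0) \<Omega>"
    using has_integral_mult_right[OF has_integral_eq[OF div_eq div], of "-1/2"] by simp
  then have "(G has_integral 0) \<Omega>"
    by simp
  then show ?thesis
    using zero_if_nonneg_has_integral_0[OF \<open>open \<Omega>\<close> cont(1) nonneg] \<open>p \<in> \<Omega>\<close> by blast
qed

lemma compact_superlevel_set:
  fixes w :: "'a::euclidean_space \<Rightarrow> real"
  assumes "open \<Omega>" and "bounded \<Omega>" and "continuous_on (closure \<Omega>) w"
    and "\<And>q. q \<in> frontier \<Omega> \<Longrightarrow> w q < c"
  shows "compact {q \<in> closure \<Omega>. c \<le> w q}" and "{q \<in> closure \<Omega>. c \<le> w q} \<subseteq> \<Omega>"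
proof -
  have "closed {q \<in> closure \<Omega>. c \<le> w q}"
    using assms(3) by (intro continuous_on_closed_Collect_le continuous_intros) auto
  moreover have "bounded {q \<in> closure \<Omega>. c \<le> w q}"
    by (rule bounded_subset[OF bounded_closure[OF \<open>bounded \<Omega>\<close>]]) auto
  ultimately show "compact {q \<in> closure \<Omega>. c \<le> w q}"
    by (simp add: compact_eq_bounded_closed)
  show "{q \<in> closure \<Omega>. c \<le> w q} \<subseteq> \<Omega>"
  proof
    fix q assume q: "q \<in> {q \<in> closure \<Omega>. c \<le> w q}"
    show "q \<in> \<Omega>"
    proof (rule ccontr)
      assume "q \<notin> \<Omega>"
      then have "q \<in> frontier \<Omega>"
        using q \<open>open \<Omega>\<close> by (simp add: frontier_def interior_open)
      then show False
        using assms(4) q by fastforce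
    qed
  qed
qed

lemma has_real_derivative_pos_part_square_diff:
  assumes "C1_on \<Omega> u" and "C1_on \<Omega> v" and "(x, y) \<in> \<Omega>"
  shows "((\<lambda>t. (max (v (t, y) - u (t, y) - c) 0)\<^sup>2) has_real_derivative
      2 * max (v (x, y) - u (x, y) - c) 0 * (px v (x, y) - px u (x, y))) (at x)"
    and "((\<lambda>t. (max (v (x, t) - u (x, t) - c) 0)\<^sup>2) has_real_derivative
      2 * max (v (x, y) - u (x, y) - c) 0 * (py v (x, y) - py u (x, y))) (at y)"
  using DERIV_chain2[OF has_real_derivative_pos_part_square
      DERIV_diff[OF DERIV_diff[OF has_real_derivative_px[OF assms(2,3)]
          has_real_derivative_px[OF assms(1,3)]] DERIV_const[of c]]]
    DERIV_chain2[OF has_real_derivative_pos_part_square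
      DERIV_diff[OF DERIV_diff[OF has_real_derivative_py[OF assms(2,3)]
          has_real_derivative_py[OF assms(1,3)]] DERIV_const[of c]]]
  by simp_all

lemma le_add_if_fields_parallel:
  fixes \<Omega> :: "(real \<times> real) set" and u v :: "real \<times> real \<Rightarrow> real"
  assumes "open \<Omega>" and "bounded \<Omega>" and C2: "C2_on \<Omega> u" "C2_on \<Omega> v"
    and "continuous_on (closure \<Omega>) u" and "continuous_on (closure \<Omega>) v"
    and parallel: "\<And>q. q \<in> \<Omega> \<Longrightarrow>
      (px u q - snd q) * (py v q + fst q) - (py u q + fst q) * (px v q - snd q) = 0"
    and "\<forall>q \<in> frontier \<Omega>. u q = v q" and "p \<in> \<Omega>" and "0 < c"
  shows "v p \<le> u p + c"
proof -
  define m where "m q = max (v q - u q - c) 0" for q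
  define K where "K = {q \<in> closure \<Omega>. c \<le> v q - u q}"
  have C1: "C1_on \<Omega> u" "C1_on \<Omega> v"
    using C2 by (auto simp: C2_on_def)
  then have cont: "continuous_on \<Omega> (px u)" "continuous_on \<Omega> (py u)"
    "continuous_on \<Omega> (px v)" "continuous_on \<Omega> (py v)"
    by (auto simp: C1_on_def)
  have cont_closure: "continuous_on (closure \<Omega>) (\<lambda>q. v q - u q)"
    using assms(5,6) by (intro continuous_intros)
  have "continuous_on \<Omega> u" "continuous_on \<Omega> v"
    using assms(5,6) closure_subset continuous_on_subset by blast+
  then have cont_m: "continuous_on \<Omega> m"
    unfolding m_def by (intro continuous_intros)
  have "compact K" "K \<subseteq> \<Omega>"
    unfolding K_def using compact_superlevel_set[OF \<open>open \<Omega>\<close> \<open>bounded \<Omega>\<close> cont_closure] assms(8) \<open>0 < c\<close>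
    by auto
  have "(\<lambda>q. (m q)\<^sup>2) p = 0"
  proof (rule first_integral_compact_support_eq_0[OF \<open>open \<Omega>\<close> C2(1) \<open>compact K\<close> \<open>K \<subseteq> \<Omega>\<close>])
    show "(m q)\<^sup>2 = 0" if "q \<in> \<Omega> - K" for q
      using that closure_subset by (auto simp: K_def m_def)
    show "continuous_on \<Omega> (\<lambda>q. (m q)\<^sup>2)"
      using cont_m by (intro continuous_intros)
    show "continuous_on \<Omega> (\<lambda>q. 2 * m q * (px v q - px u q))"
      using cont cont_m by (intro continuous_intros)
    show "continuous_on \<Omega> (\<lambda>q. 2 * m q * (py v q - py u q))"
      using cont cont_m by (intro continuous_intros)
    show "(px u q - snd q) * (2 * m q * (py v q - py u q)) = (py u q + fst q) * (2 * m q * (px v q - px u q))"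
      if "q \<in> \<Omega>" for q
      using arg_cong[OF parallel[OF that], of "\<lambda>z. 2 * m q * z"] by (simp add: algebra_simps)
    show "((\<lambda>t. (m (t, y))\<^sup>2) has_real_derivative 2 * m (x, y) * (px v (x, y) - px u (x, y))) (at x)"
      if "(x, y) \<in> \<Omega>" for x y
      using has_real_derivative_pos_part_square_diff(1)[OF C1 that] by (simp add: m_def)
    show "((\<lambda>t. (m (x, t))\<^sup>2) has_real_derivative 2 * m (x, y) * (py v (x, y) - py u (x, y))) (at y)"
      if "(x, y) \<in> \<Omega>" for x y
      using has_real_derivative_pos_part_square_diff(2)[OF C1 that] by (simp add: m_def)
  qed (simp_all add: \<open>p \<in> \<Omega>\<close>)
  then show ?thesis
    by (simp add: m_def)
qed

lemma cross_eq_0_if_normalized_eq: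
  fixes a1 a2 b1 b2 :: real
  assumes "a1 / sqrt (a1\<^sup>2 + a2\<^sup>2) = b1 / sqrt (b1\<^sup>2 + b2\<^sup>2)"
    and "a2 / sqrt (a1\<^sup>2 + a2\<^sup>2) = b2 / sqrt (b1\<^sup>2 + b2\<^sup>2)"
  shows "a1 * b2 - a2 * b1 = 0"
proof (cases "a1 = 0 \<and> a2 = 0")
  case False
  define r where "r = sqrt (a1\<^sup>2 + a2\<^sup>2)"
  have "r \<noteq> 0"
    using False by (simp add: r_def)
  then have "a1 * b2 - a2 * b1 = r * ((a1 / r) * b2 - (a2 / r) * b1)"
    by (simp add: algebra_simps)
  also have "\<dots> = r * ((b1 / sqrt (b1\<^sup>2 + b2\<^sup>2)) * b2 - (b2 / sqrt (b1\<^sup>2 + b2\<^sup>2)) * b1)"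
    using assms by (simp add: r_def)
  finally show ?thesis
    by simp
qed auto

lemma parallel_if_Nfield_eq:
  assumes "\<forall>p \<in> \<Omega> - (sing_set \<Omega> u \<union> sing_set \<Omega> v). Nfield u p = Nfield v p" and "q \<in> \<Omega>"
  shows "(px u q - snd q) * (py v q + fst q) - (py u q + fst q) * (px v q - snd q) = 0"
proof (cases "q \<in> sing_set \<Omega> u \<union> sing_set \<Omega> v")
  case True
  then show ?thesis
    by (auto simp: sing_set_def)
next
  case False
  then have "Nfield u q = Nfield v q"
    using assms by blast
  then show ?thesis
    unfolding Nfield_def Let_def by (intro cross_eq_0_if_normalized_eq) simp_all
qed

theorem lemma5p3:
  fixes \<Omega> :: "(real \<times> real) set" and u v :: "real \<times> real \<Rightarrow> real"
  assumes "open \<Omega>" and "connected \<Omega>" and "bounded \<Omega>"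
    and "C2_on \<Omega> u" and "C2_on \<Omega> v"
    and "continuous_on (closure \<Omega>) u" and "continuous_on (closure \<Omega>) v"
    and "\<forall>p \<in> \<Omega> - (sing_set \<Omega> u \<union> sing_set \<Omega> v). Nfield u p = Nfield v p"
    and "\<forall>p \<in> frontier \<Omega>. u p = v p"
  shows "\<forall>p \<in> \<Omega>. u p = v p"
proof
  fix p assume "p \<in> \<Omega>"
  have "v p \<le> u p + c" if "0 < c" for c
    by (rule le_add_if_fields_parallel[OF assms(1,3,4,5,6,7) parallel_if_Nfield_eq[OF assms(8)] assms(9)])
      (use \<open>p \<in> \<Omega>\<close> that in auto)
  moreover have "u p \<le> v p + c" if "0 < c" for c
  proof (rule le_add_if_fields_parallel[OF assms(1,3,5,4,7,6) parallel_if_Nfield_eq])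
    show "\<forall>p \<in> \<Omega> - (sing_set \<Omega> v \<union> sing_set \<Omega> u). Nfield v p = Nfield u p"
      using assms(8) by auto
  qed (use assms(9) \<open>p \<in> \<Omega>\<close> that in auto)
  ultimately show "u p = v p"
    by (meson field_le_epsilon order_antisym)
qed

end
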